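(* Let $\hat{\mathbf{P}}\in\mathbb{R}^{N\times N}$ be a matrix with nonnegative entries, columns summing to $1$, and $\hat{\mathbf{P}}\boldsymbol\mu=\boldsymbol\mu$, such that $\langle\hat{\mathbf{P}},\mathbf{P}\rangle_\mu\ge2\|\boldsymbol\mu\|^2$ and $c'\|\mathbf{P}\|_\mu^2\le\|\hat{\mathbf{P}}\|_\mu^2\le C'\|\mathbf{P}\|_\mu^2$ for constants $0<c'\le C'$. Let $\mathbf{V}=\theta\hat{\mathbf{P}}+(1-\theta)\boldsymbol\mu\mathbf{1}^\top$ for some $\theta\in(0,1)$. Then there are constants $c_1,c_2,c_3>0$ depending only on $C$ and $C'$ such that $$\alpha_V\in\Big[c_1\frac{\theta}{NK_P},\;c_2\theta\Big]\quad\text{and}\quad\|\boldsymbol\Delta_V\|_\mu^2\le c_3\theta^2K_P.$$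
   Context: $\boldsymbol\mu\in\mathbb{R}^N$ is a probability vector with $\mu_k\in[1/(CN),C/N]$ for all $k$, for a constant $C\ge1$. $\mathbf{P}\in\mathbb{R}^{N\times N}$ has nonnegative entries, columns summing to $1$, $\mathbf{P}\boldsymbol\mu=\boldsymbol\mu$, and satisfies $\|\mathbf{P}\|_\mu^2-\|\boldsymbol\mu\|^2\ge\|\boldsymbol\mu\|^2$. $\langle\mathbf{M},\mathbf{M}'\rangle_\mu=\operatorname{Tr}(\mathbf{M}\operatorname{diag}(\boldsymbol\mu)\mathbf{M}'^\top)$, $\|\mathbf{M}\|_\mu^2=\langle\mathbf{M},\mathbf{M}\rangle_\mu$; $\|\boldsymbol\mu\|$ Euclidean. $K_P=\|\mathbf{P}\|_\mu^2-\|\boldsymbol\mu\|^2$, $\alpha_V=(\langle\mathbf{V},\mathbf{P}\rangle_\mu-\|\boldsymbol\mu\|^2)/K_P$, $\boldsymbol\Delta_V=\mathbf{V}-\alpha_V\mathbf{P}-(1-\alpha_V)\boldsymbol\mu\mathbf{1}^\top$. *)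

theory Defs
  imports Complex_Main
begin

text \<open>Vectors in R^N are functions nat => real (indices 0..N-1), N x N matrices
are functions nat => nat => real (entry M i k = row i, column k).\<close>

definition prob_vec :: "nat \<Rightarrow> (nat \<Rightarrow> real) \<Rightarrow> bool" where
  "prob_vec N mu \<longleftrightarrow> (\<forall>k<N. mu k \<ge> 0) \<and> (\<Sum>k<N. mu k) = 1"

definition stoch_fix :: "nat \<Rightarrow> (nat \<Rightarrow> real) \<Rightarrow> (nat \<Rightarrow> nat \<Rightarrow> real) \<Rightarrow> bool" where
  "stoch_fix N mu M \<longleftrightarrow> (\<forall>i<N. \<forall>k<N. M i k \<ge> 0)
      \<and> (\<forall>k<N. (\<Sum>i<N. M i k) = 1)
      \<and> (\<forall>i<N. (\<Sum>k<N. M i k * mu k) = mu i)"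

text \<open>Tr(M diag(mu) M'^T) = sum_{i,k} M i k * mu k * M' i k\<close>
definition mu_inner :: "nat \<Rightarrow> (nat \<Rightarrow> real) \<Rightarrow> (nat \<Rightarrow> nat \<Rightarrow> real) \<Rightarrow> (nat \<Rightarrow> nat \<Rightarrow> real) \<Rightarrow> real" where
  "mu_inner N mu M M' = (\<Sum>i<N. \<Sum>k<N. M i k * mu k * M' i k)"

definition mu_norm_sq :: "nat \<Rightarrow> (nat \<Rightarrow> real) \<Rightarrow> (nat \<Rightarrow> nat \<Rightarrow> real) \<Rightarrow> real" where
  "mu_norm_sq N mu M = mu_inner N mu M M"

definition vec_norm_sq :: "nat \<Rightarrow> (nat \<Rightarrow> real) \<Rightarrow> real" where
  "vec_norm_sq N v = (\<Sum>i<N. (v i)^2)"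

definition K_of :: "nat \<Rightarrow> (nat \<Rightarrow> real) \<Rightarrow> (nat \<Rightarrow> nat \<Rightarrow> real) \<Rightarrow> real" where
  "K_of N mu P = mu_norm_sq N mu P - vec_norm_sq N mu"

definition alpha_of :: "nat \<Rightarrow> (nat \<Rightarrow> real) \<Rightarrow> (nat \<Rightarrow> nat \<Rightarrow> real) \<Rightarrow> (nat \<Rightarrow> nat \<Rightarrow> real) \<Rightarrow> real" where
  "alpha_of N mu P V = (mu_inner N mu V P - vec_norm_sq N mu) / K_of N mu P"

definition Delta_of :: "nat \<Rightarrow> (nat \<Rightarrow> real) \<Rightarrow> (nat \<Rightarrow> nat \<Rightarrow> real) \<Rightarrow> (nat \<Rightarrow> nat \<Rightarrow> real) \<Rightarrow> nat \<Rightarrow> nat \<Rightarrow> real" where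
  "Delta_of N mu P V = (\<lambda>i k. V i k - alpha_of N mu P V * P i k - (1 - alpha_of N mu P V) * mu i)"

end

theory Submission
  imports Defs "HOL-Analysis.Convex"
begin

text \<open>Write \<open>Ph\<close> for \<open>P\<close>-hat and \<open>A\<^sup>c = A - \<mu>1\<^sup>T\<close>. For matrices fixing \<open>\<mu>\<close> one has
  \<open>\<langle>A\<^sup>c, B\<^sup>c\<rangle>\<^sub>\<mu> = \<langle>A, B\<rangle>\<^sub>\<mu> - \<parallel>\<mu>\<parallel>\<^sup>2\<close>, so \<open>K\<^sub>P = \<parallel>P\<^sup>c\<parallel>\<^sub>\<mu>\<^sup>2\<close>; moreover \<open>V\<^sup>c = \<theta> Ph\<^sup>c\<close>, whence
  \<open>\<alpha>\<^sub>V = \<theta>\<langle>Ph\<^sup>c, P\<^sup>c\<rangle>\<^sub>\<mu> / K\<^sub>P\<close> and \<open>\<Delta>\<^sub>V = \<theta> Ph\<^sup>c - \<alpha>\<^sub>V P\<^sup>c\<close>. The upper bounds follow from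
  \<open>2\<langle>A, B\<rangle>\<^sub>\<mu> \<le> \<parallel>A\<parallel>\<^sub>\<mu>\<^sup>2 + \<parallel>B\<parallel>\<^sub>\<mu>\<^sup>2\<close> and \<open>\<parallel>Ph\<^sup>c\<parallel>\<^sub>\<mu>\<^sup>2 \<le> C'\<parallel>P\<parallel>\<^sub>\<mu>\<^sup>2 \<le> 2C'K\<^sub>P\<close>, the lower bound from
  \<open>\<langle>Ph\<^sup>c, P\<^sup>c\<rangle>\<^sub>\<mu> \<ge> \<parallel>\<mu>\<parallel>\<^sup>2 \<ge> 1/N\<close> (Cauchy-Schwarz). This gives \<open>c\<^sub>1 = 1\<close>, \<open>c\<^sub>2 = C' + 1\<close> and
  \<open>c\<^sub>3 = 4C' + 2(C' + 1)\<^sup>2\<close>; the bounds on the entries of \<open>\<mu>\<close>, the lower bound \<open>c'\<close> and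
  \<open>\<theta> < 1\<close> are not needed.\<close>

definition centered :: "(nat \<Rightarrow> real) \<Rightarrow> (nat \<Rightarrow> nat \<Rightarrow> real) \<Rightarrow> nat \<Rightarrow> nat \<Rightarrow> real" where
  "centered mu M = (\<lambda>i k. M i k - mu i)"

lemma mu_inner_scale_left:
  "mu_inner N mu (\<lambda>i k. c * A i k) B = c * mu_inner N mu A B"
  by (simp add: mu_inner_def sum_distrib_left mult_ac)

lemma mu_norm_sq_scale:
  "mu_norm_sq N mu (\<lambda>i k. c * A i k) = c^2 * mu_norm_sq N mu A"
  by (simp add: mu_norm_sq_def mu_inner_def sum_distrib_left power2_eq_square mult_ac)

lemma mu_inner_le_half_norm_sq:
  assumes "\<forall>k<N. mu k \<ge> 0"
  shows "mu_inner N mu A B \<le> (mu_norm_sq N mu A + mu_norm_sq N mu B) / 2"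
proof -
  have "A i k * mu k * B i k \<le> ((A i k)^2 * mu k + (B i k)^2 * mu k) / 2" if "k < N" for i k
  proof -
    have "0 \<le> (A i k - B i k)^2 * mu k" using assms that by simp
    then show ?thesis by (simp add: power2_eq_square algebra_simps)
  qed
  then have "mu_inner N mu A B \<le> (\<Sum>i<N. \<Sum>k<N. ((A i k)^2 * mu k + (B i k)^2 * mu k) / 2)"
    unfolding mu_inner_def by (intro sum_mono) auto
  also have "\<dots> = (mu_norm_sq N mu A + mu_norm_sq N mu B) / 2"
    by (simp add: mu_norm_sq_def mu_inner_def sum.distrib power2_eq_square mult_ac
        flip: sum_divide_distrib)
  finally show ?thesis .
qed

lemma mu_norm_sq_diff_le:
  assumes "\<forall>k<N. mu k \<ge> 0"
  shows "mu_norm_sq N mu (\<lambda>i k. A i k - B i k) \<le> 2 * mu_norm_sq N mu A + 2 * mu_norm_sq N mu B"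
proof -
  have "mu_norm_sq N mu (\<lambda>i k. A i k - B i k)
      = mu_norm_sq N mu A + mu_norm_sq N mu B - 2 * mu_inner N mu A B"
    by (simp add: mu_norm_sq_def mu_inner_def sum_subtractf sum.distrib sum_distrib_left
        algebra_simps)
  then show ?thesis using mu_inner_le_half_norm_sq[OF assms, of "\<lambda>i k. - A i k" B]
    by (simp add: mu_norm_sq_def mu_inner_def sum_negf)
qed

lemma mu_inner_centered:
  assumes "(\<Sum>k<N. mu k) = 1"
    and "\<forall>i<N. (\<Sum>k<N. A i k * mu k) = mu i" and "\<forall>i<N. (\<Sum>k<N. B i k * mu k) = mu i"
  shows "mu_inner N mu (centered mu A) (centered mu B) = mu_inner N mu A B - vec_norm_sq N mu"
proof -
  have "mu_inner N mu (centered mu A) (centered mu B)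
      = mu_inner N mu A B - (\<Sum>i<N. mu i * (\<Sum>k<N. A i k * mu k))
        - (\<Sum>i<N. mu i * (\<Sum>k<N. B i k * mu k)) + (\<Sum>i<N. (mu i)^2 * (\<Sum>k<N. mu k))"
    by (simp add: mu_inner_def centered_def sum_subtractf sum.distrib sum_distrib_left
        power2_eq_square algebra_simps)
  also have "\<dots> = mu_inner N mu A B - vec_norm_sq N mu"
    using assms by (simp add: vec_norm_sq_def power2_eq_square)
  finally show ?thesis .
qed

lemma prob_vec_dim_pos: "prob_vec N mu \<Longrightarrow> 0 < N"
  by (cases N) (auto simp: prob_vec_def)

lemma vec_norm_sq_ge_inverse_dim:
  assumes "prob_vec N mu"
  shows "1 / real N \<le> vec_norm_sq N mu"
proof -
  have "N > 0" using assms by (rule prob_vec_dim_pos)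
  moreover have "1 \<le> vec_norm_sq N mu * real N"
    using sum_squared_le_sum_of_squares[of mu "{..<N}"] assms
    by (simp add: prob_vec_def vec_norm_sq_def)
  ultimately show ?thesis by (simp add: field_simps)
qed

lemma K_of_centered:
  assumes "(\<Sum>k<N. mu k) = 1" and "\<forall>i<N. (\<Sum>k<N. P i k * mu k) = mu i"
  shows "K_of N mu P = mu_norm_sq N mu (centered mu P)"
  using mu_inner_centered[OF assms(1,2,2)] by (simp add: K_of_def mu_norm_sq_def)

lemma centered_mixture:
  "centered mu (\<lambda>i k. \<theta> * M i k + (1 - \<theta>) * mu i) = (\<lambda>i k. \<theta> * centered mu M i k)"
  by (simp add: centered_def algebra_simps)

lemma mixture_fixes:
  fixes mu :: "nat \<Rightarrow> real"
  assumes "(\<Sum>k<N. mu k) = 1" and "\<forall>i<N. (\<Sum>k<N. M i k * mu k) = mu i"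
  shows "\<forall>i<N. (\<Sum>k<N. (\<theta> * M i k + (1 - \<theta>) * mu i) * mu k) = mu i"
proof (intro allI impI)
  fix i
  assume "i < N"
  have "(\<Sum>k<N. (\<theta> * M i k + (1 - \<theta>) * mu i) * mu k)
      = (\<Sum>k<N. \<theta> * (M i k * mu k) + (1 - \<theta>) * mu i * mu k)"
    by (simp add: algebra_simps)
  also have "\<dots> = \<theta> * (\<Sum>k<N. M i k * mu k) + (1 - \<theta>) * mu i * (\<Sum>k<N. mu k)"
    by (simp add: sum.distrib sum_distrib_left)
  also have "\<dots> = mu i"
    using assms \<open>i < N\<close> by (simp add: algebra_simps)
  finally show "(\<Sum>k<N. (\<theta> * M i k + (1 - \<theta>) * mu i) * mu k) = mu i" .
qed

lemma alpha_of_mixture: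
  assumes "(\<Sum>k<N. mu k) = 1"
    and P: "\<forall>i<N. (\<Sum>k<N. P i k * mu k) = mu i" and M: "\<forall>i<N. (\<Sum>k<N. M i k * mu k) = mu i"
  shows "alpha_of N mu P (\<lambda>i k. \<theta> * M i k + (1 - \<theta>) * mu i)
    = \<theta> * mu_inner N mu (centered mu M) (centered mu P) / K_of N mu P"
  using mu_inner_centered[OF assms(1) mixture_fixes[OF assms(1) M] P]
  by (simp add: alpha_of_def centered_mixture mu_inner_scale_left)

lemma Delta_of_centered:
  "Delta_of N mu P V = (\<lambda>i k. centered mu V i k - alpha_of N mu P V * centered mu P i k)"
  by (simp add: Delta_of_def centered_def algebra_simps)

lemma mu_norm_sq_centered_le:
  fixes C' :: real
  assumes mu_sum: "(\<Sum>k<N. mu k) = 1" and M: "\<forall>i<N. (\<Sum>k<N. M i k * mu k) = mu i"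
    and K_ge: "vec_norm_sq N mu \<le> K_of N mu P"
    and M_le: "mu_norm_sq N mu M \<le> C' * mu_norm_sq N mu P" and "0 \<le> C'"
  shows "mu_norm_sq N mu (centered mu M) \<le> 2 * C' * K_of N mu P"
proof -
  have "0 \<le> vec_norm_sq N mu"
    by (simp add: vec_norm_sq_def sum_nonneg)
  have "mu_norm_sq N mu (centered mu M) = mu_norm_sq N mu M - vec_norm_sq N mu"
    using mu_inner_centered[OF mu_sum M M] by (simp add: mu_norm_sq_def)
  also have "\<dots> \<le> C' * (K_of N mu P + vec_norm_sq N mu)"
    using M_le \<open>0 \<le> vec_norm_sq N mu\<close> by (simp add: K_of_def)
  also have "\<dots> \<le> C' * (2 * K_of N mu P)"
    using K_ge \<open>0 \<le> C'\<close> by (intro mult_left_mono) auto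
  finally show ?thesis by simp
qed

lemma alpha_of_mixture_bounds:
  fixes C' \<theta> :: real
  assumes mu: "prob_vec N mu" and P: "stoch_fix N mu P" and Ph: "stoch_fix N mu Ph"
    and K_ge: "vec_norm_sq N mu \<le> K_of N mu P"
    and inner_ge: "2 * vec_norm_sq N mu \<le> mu_inner N mu Ph P"
    and Ph_le: "mu_norm_sq N mu Ph \<le> C' * mu_norm_sq N mu P"
    and "0 \<le> C'" "0 \<le> \<theta>"
  defines "V \<equiv> \<lambda>i k. \<theta> * Ph i k + (1 - \<theta>) * mu i"
  shows "\<theta> / (real N * K_of N mu P) \<le> alpha_of N mu P V"
    and "alpha_of N mu P V \<le> (C' + 1) * \<theta>"
proof -
  define K X where "K = K_of N mu P" and "X = mu_inner N mu (centered mu Ph) (centered mu P)"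
  have mu_sum: "(\<Sum>k<N. mu k) = 1" and mu_nonneg: "\<forall>k<N. 0 \<le> mu k"
    using mu by (auto simp: prob_vec_def)
  have P_fix: "\<forall>i<N. (\<Sum>k<N. P i k * mu k) = mu i"
    and Ph_fix: "\<forall>i<N. (\<Sum>k<N. Ph i k * mu k) = mu i"
    using P Ph by (auto simp: stoch_fix_def)
  have m_ge: "1 / real N \<le> vec_norm_sq N mu"
    using vec_norm_sq_ge_inverse_dim[OF mu] .
  have "0 < 1 / real N"
    using prob_vec_dim_pos[OF mu] by simp
  then have K_pos: "0 < K"
    using K_ge m_ge unfolding K_def by linarith
  have alpha_eq: "alpha_of N mu P V = \<theta> * X / K"
    using alpha_of_mixture[OF mu_sum P_fix Ph_fix] by (simp add: V_def K_def X_def)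
  have X_ge: "1 / real N \<le> X"
    using mu_inner_centered[OF mu_sum Ph_fix P_fix] inner_ge m_ge by (simp add: X_def)
  have "\<theta> / (real N * K) = \<theta> * (1 / real N) / K" by simp
  also have "\<dots> \<le> \<theta> * X / K"
    using X_ge K_pos \<open>0 \<le> \<theta>\<close> by (intro divide_right_mono mult_left_mono) auto
  finally show "\<theta> / (real N * K_of N mu P) \<le> alpha_of N mu P V"
    by (simp add: alpha_eq K_def)
  have "X \<le> (mu_norm_sq N mu (centered mu Ph) + K) / 2"
    using mu_inner_le_half_norm_sq[OF mu_nonneg] K_of_centered[OF mu_sum P_fix]
    by (simp add: X_def K_def)
  also have "\<dots> \<le> (C' + 1) * K"
    using mu_norm_sq_centered_le[OF mu_sum Ph_fix K_ge Ph_le \<open>0 \<le> C'\<close>] K_pos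
    by (simp add: K_def algebra_simps)
  finally have "\<theta> * X / K \<le> \<theta> * ((C' + 1) * K) / K"
    using K_pos \<open>0 \<le> \<theta>\<close> by (intro divide_right_mono mult_left_mono) auto
  then show "alpha_of N mu P V \<le> (C' + 1) * \<theta>"
    using K_pos by (simp add: alpha_eq mult.commute)
qed

lemma Delta_of_mixture_bound:
  fixes C' \<theta> :: real
  assumes mu: "prob_vec N mu" and P: "stoch_fix N mu P" and Ph: "stoch_fix N mu Ph"
    and K_ge: "vec_norm_sq N mu \<le> K_of N mu P"
    and "2 * vec_norm_sq N mu \<le> mu_inner N mu Ph P"
    and Ph_le: "mu_norm_sq N mu Ph \<le> C' * mu_norm_sq N mu P"
    and "0 \<le> C'" "0 \<le> \<theta>"
  defines "V \<equiv> \<lambda>i k. \<theta> * Ph i k + (1 - \<theta>) * mu i"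
  shows "mu_norm_sq N mu (Delta_of N mu P V) \<le> (4 * C' + 2 * (C' + 1)^2) * \<theta>^2 * K_of N mu P"
proof -
  define K a where "K = K_of N mu P" and "a = alpha_of N mu P V"
  note alpha_bounds = alpha_of_mixture_bounds[OF assms(1-8), folded V_def]
  have mu_sum: "(\<Sum>k<N. mu k) = 1" and mu_nonneg: "\<forall>k<N. 0 \<le> mu k"
    using mu by (auto simp: prob_vec_def)
  have P_fix: "\<forall>i<N. (\<Sum>k<N. P i k * mu k) = mu i"
    and Ph_fix: "\<forall>i<N. (\<Sum>k<N. Ph i k * mu k) = mu i"
    using P Ph by (auto simp: stoch_fix_def)
  have "0 \<le> vec_norm_sq N mu"
    by (simp add: vec_norm_sq_def sum_nonneg)
  then have K_nonneg: "0 \<le> K"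
    using K_ge by (simp add: K_def)
  then have "0 \<le> \<theta> / (real N * K)"
    using \<open>0 \<le> \<theta>\<close> by simp
  then have "0 \<le> a"
    using alpha_bounds(1) by (simp add: a_def K_def)
  then have a_sq: "a^2 \<le> (C' + 1)^2 * \<theta>^2"
    using alpha_bounds(2) power_mono by (fastforce simp: a_def simp flip: power_mult_distrib)
  have "Delta_of N mu P V = (\<lambda>i k. \<theta> * centered mu Ph i k - a * centered mu P i k)"
    by (simp add: Delta_of_centered V_def centered_mixture a_def)
  then have "mu_norm_sq N mu (Delta_of N mu P V)
      \<le> 2 * (\<theta>^2 * mu_norm_sq N mu (centered mu Ph)) + 2 * (a^2 * K)"
    using mu_norm_sq_diff_le[OF mu_nonneg, of "\<lambda>i k. \<theta> * centered mu Ph i k" "\<lambda>i k. a * centered mu P i k"]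
    by (simp add: mu_norm_sq_scale K_of_centered[OF mu_sum P_fix] K_def)
  also have "\<dots> \<le> 2 * (\<theta>^2 * (2 * C' * K)) + 2 * ((C' + 1)^2 * \<theta>^2 * K)"
    using mu_norm_sq_centered_le[OF mu_sum Ph_fix K_ge Ph_le \<open>0 \<le> C'\<close>] a_sq K_nonneg
    by (intro add_mono mult_left_mono mult_right_mono) (auto simp: K_def)
  finally show ?thesis
    by (simp add: K_def algebra_simps)
qed

theorem lemmaH1:
  fixes C C' :: real
  assumes "C \<ge> 1" and "C' > 0"
  shows "\<exists>c1 c2 c3 :: real. c1 > 0 \<and> c2 > 0 \<and> c3 > 0 \<and>
    (\<forall>(N::nat) (mu::nat \<Rightarrow> real) (P::nat \<Rightarrow> nat \<Rightarrow> real) (Ph::nat \<Rightarrow> nat \<Rightarrow> real) (c'::real) (\<theta>::real).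
       prob_vec N mu
     \<and> (\<forall>k<N. 1 / (C * real N) \<le> mu k \<and> mu k \<le> C / real N)
     \<and> stoch_fix N mu P
     \<and> mu_norm_sq N mu P - vec_norm_sq N mu \<ge> vec_norm_sq N mu
     \<and> stoch_fix N mu Ph
     \<and> mu_inner N mu Ph P \<ge> 2 * vec_norm_sq N mu
     \<and> 0 < c' \<and> c' \<le> C'
     \<and> c' * mu_norm_sq N mu P \<le> mu_norm_sq N mu Ph
     \<and> mu_norm_sq N mu Ph \<le> C' * mu_norm_sq N mu P
     \<and> 0 < \<theta> \<and> \<theta> < 1
     \<longrightarrow> (let V = (\<lambda>i k. \<theta> * Ph i k + (1 - \<theta>) * mu i);
              K = K_of N mu P;
              a = alpha_of N mu P V
          in c1 * \<theta> / (real N * K) \<le> a \<and> a \<le> c2 * \<theta>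
           \<and> mu_norm_sq N mu (Delta_of N mu P V) \<le> c3 * \<theta>^2 * K))"
proof -
  have bounds: "let V = (\<lambda>i k. \<theta> * Ph i k + (1 - \<theta>) * mu i); K = K_of N mu P; a = alpha_of N mu P V
      in \<theta> / (real N * K) \<le> a \<and> a \<le> (C' + 1) * \<theta>
       \<and> mu_norm_sq N mu (Delta_of N mu P V) \<le> (4 * C' + 2 * (C' + 1)^2) * \<theta>^2 * K"
    if "prob_vec N mu" "stoch_fix N mu P" "vec_norm_sq N mu \<le> mu_norm_sq N mu P - vec_norm_sq N mu"
      "stoch_fix N mu Ph" "2 * vec_norm_sq N mu \<le> mu_inner N mu Ph P"
      "mu_norm_sq N mu Ph \<le> C' * mu_norm_sq N mu P" "0 < \<theta>"
    for N mu P Ph and \<theta> :: real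
  proof -
    have "vec_norm_sq N mu \<le> K_of N mu P"
      using that(3) by (simp add: K_of_def)
    note hyps = that(1,2,4) this that(5,6) less_imp_le[OF \<open>C' > 0\<close>] less_imp_le[OF that(7)]
    show ?thesis
      using alpha_of_mixture_bounds[OF hyps] Delta_of_mixture_bound[OF hyps] by (simp add: Let_def)
  qed
  have "0 < 4 * C' + 2 * (C' + 1)^2"
    using \<open>C' > 0\<close> by (simp add: add_pos_nonneg)
  then show ?thesis
    using \<open>C' > 0\<close> bounds
    by (intro exI[of _ 1] exI[of _ "C' + 1"] exI[of _ "4 * C' + 2 * (C' + 1)^2"]) auto
qed

end
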